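(* Let $\mathcal{A}$ be a complex Banach algebra with identity, $\lambda$ a nonzero complex number, and $M = \begin{pmatrix} A & B \\ C & D \end{pmatrix} \in M_2(\mathcal{A})$ with $A, D \in \mathcal{A}^d$. If $$AB = \lambda A^\pi B D,\quad DC = \lambda D^\pi C A,\quad BC = 0,$$ then $M \in M_2(\mathcal{A})^d$ and $$M^d = \begin{pmatrix} A^d & 0 \\ 0 & D^d \end{pmatrix} + \sum_{n=0}^{\infty} M^n \begin{pmatrix} 0 & B(D^d)^{n+2} \\ C(A^d)^{n+2} & 0 \end{pmatrix}.$$
   Context: $M_2(\mathcal{A})$ is the Banach algebra of $2\times 2$ matrices over $\mathcal{A}$. An element $x$ of a Banach algebra has a generalized Drazin (g-Drazin) inverse $x^d$ if $x^d$ commutes with $x$, $x^d = x^dxx^d$ and $x - x^2x^d$ is quasinilpotent (i.e. $\lim\|y^n\|^{1/n}=0$ for $y=x-x^2x^d$); $\mathcal{A}^d$ (resp. $M_2(\mathcal{A})^d$) denotes the set of g-Drazin invertible elements. The spectral idempotent is $x^\pi = 1 - xx^d$. $M^0$ is the identity matrix. *)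

theory Defs
  imports "HOL-Analysis.Analysis"
begin

class complex_banach_algebra_1 = banach + real_normed_algebra_1 +
  fixes scaleC :: "complex \<Rightarrow> 'a \<Rightarrow> 'a"
  assumes scaleC_of_real: "scaleC (complex_of_real r) x = scaleR r x"
    and scaleC_add_right: "scaleC a (x + y) = scaleC a x + scaleC a y"
    and scaleC_add_left: "scaleC (a + b) x = scaleC a x + scaleC b x"
    and scaleC_scaleC: "scaleC a (scaleC b x) = scaleC (a * b) x"
    and scaleC_one: "scaleC 1 x = x"
    and norm_scaleC: "norm (scaleC a x) = cmod a * norm x"
    and mult_scaleC_left: "scaleC a x * y = scaleC a (x * y)"
    and mult_scaleC_right: "x * scaleC a y = scaleC a (x * y)"

definition quasinilpotent :: "'a::real_normed_algebra_1 \<Rightarrow> bool" where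
  "quasinilpotent y \<longleftrightarrow> (\<lambda>n. root n (norm (y ^ n))) \<longlonglongrightarrow> 0"

definition is_gdrazin :: "'a::real_normed_algebra_1 \<Rightarrow> 'a \<Rightarrow> bool" where
  "is_gdrazin x xd \<longleftrightarrow> xd * x = x * xd \<and> xd = xd * x * xd \<and> quasinilpotent (x - x\<^sup>2 * xd)"

definition spec_idem :: "'a::real_normed_algebra_1 \<Rightarrow> 'a \<Rightarrow> 'a" where
  "spec_idem x xd = 1 - x * xd"

datatype 'a m2 = M2 (e11: 'a) (e12: 'a) (e21: 'a) (e22: 'a)

fun m2_mult :: "'a::ring m2 \<Rightarrow> 'a m2 \<Rightarrow> 'a m2" where
  "m2_mult (M2 a b c d) (M2 a' b' c' d') =
     M2 (a * a' + b * c') (a * b' + b * d') (c * a' + d * c') (c * b' + d * d')"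

fun m2_add :: "'a::ab_group_add m2 \<Rightarrow> 'a m2 \<Rightarrow> 'a m2" where
  "m2_add (M2 a b c d) (M2 a' b' c' d') = M2 (a + a') (b + b') (c + c') (d + d')"

fun m2_diff :: "'a::ab_group_add m2 \<Rightarrow> 'a m2 \<Rightarrow> 'a m2" where
  "m2_diff (M2 a b c d) (M2 a' b' c' d') = M2 (a - a') (b - b') (c - c') (d - d')"

definition m2_one :: "'a::ring_1 m2" where
  "m2_one = M2 1 0 0 1"

primrec m2_pow :: "'a::ring_1 m2 \<Rightarrow> nat \<Rightarrow> 'a m2" where
  "m2_pow X 0 = m2_one"
| "m2_pow X (Suc n) = m2_mult (m2_pow X n) X"

text \<open>A norm on M_2(A) (all algebra norms on M_2(A) are equivalent, and
  quasinilpotence / convergence do not depend on the choice).\<close>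
fun m2_norm :: "'a::real_normed_vector m2 \<Rightarrow> real" where
  "m2_norm (M2 a b c d) = norm a + norm b + norm c + norm d"

definition m2_quasinilpotent :: "'a::real_normed_algebra_1 m2 \<Rightarrow> bool" where
  "m2_quasinilpotent Y \<longleftrightarrow> (\<lambda>n. root n (m2_norm (m2_pow Y n))) \<longlonglongrightarrow> 0"

definition m2_is_gdrazin :: "'a::real_normed_algebra_1 m2 \<Rightarrow> 'a m2 \<Rightarrow> bool" where
  "m2_is_gdrazin X Xd \<longleftrightarrow> m2_mult Xd X = m2_mult X Xd
     \<and> Xd = m2_mult (m2_mult Xd X) Xd
     \<and> m2_quasinilpotent (m2_diff X (m2_mult (m2_pow X 2) Xd))"

text \<open>Convergence of a series of matrices (in norm, equivalently entrywise).\<close>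
definition m2_sums :: "(nat \<Rightarrow> 'a::real_normed_vector m2) \<Rightarrow> 'a m2 \<Rightarrow> bool" where
  "m2_sums f S \<longleftrightarrow> (\<lambda>n. e11 (f n)) sums e11 S \<and> (\<lambda>n. e12 (f n)) sums e12 S
     \<and> (\<lambda>n. e21 (f n)) sums e21 S \<and> (\<lambda>n. e22 (f n)) sums e22 S"

end

theory Submission
  imports Defs
begin

(* The hypothesis A B = lam A^pi B D forces A^d B = 0, hence A^pi B = B and the twisted
   commutation a B = lam B D for the quasinilpotent part a = A - A^2 A^d. Iterating gives
   B D^d = lam^-n a^n B (D^d)^(n+1) for all n, so B D^d = 0; symmetrically D^d C = 0 and
   C A^d = 0. Thus every term of the series vanishes and M^d = diag(A^d, D^d). What remains
   is the quasinilpotence of M - M^2 M^d = [[a, B], [C, d]] with d = D - D^2 D^d: by the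
   twisted commutation its powers have the explicit entries a^n, (sum lam^k) B d^(n-1),
   (sum lam^k) C a^(n-1) and d^n + delta_n C B d^(n-2), whose scalar coefficients grow only
   geometrically, while a^n and d^n decay faster than any geometric sequence. *)

lemma eventually_le_power_if_root_tendsto_0:
  fixes f :: "nat \<Rightarrow> real"
  assumes lim: "(\<lambda>n. root n (f n)) \<longlonglongrightarrow> 0" and e: "0 < e"
  shows "\<forall>\<^sub>F n in sequentially. f n \<le> e ^ n"
proof -
  have "\<forall>\<^sub>F n in sequentially. root n (f n) < e \<and> 0 < n"
    using order_tendstoD(2)[OF lim e] eventually_gt_at_top by (rule eventually_conj)
  then show ?thesis
  proof (rule eventually_mono)
    fix n assume n: "root n (f n) < e \<and> 0 < n"
    then have "root n (f n) \<le> root n (e ^ n)"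
      using e by (simp add: real_root_pos2)
    then show "f n \<le> e ^ n"
      using n by simp
  qed
qed

lemma root_tendsto_0_if_exponential_bound:
  fixes f :: "nat \<Rightarrow> real"
  assumes nonneg: "\<And>n. 0 \<le> f n"
    and bound: "\<And>e. 0 < e \<Longrightarrow> \<exists>c>0. \<forall>\<^sub>F n in sequentially. f n \<le> c * e ^ n"
  shows "(\<lambda>n. root n (f n)) \<longlonglongrightarrow> 0"
proof (rule LIMSEQ_I)
  fix r :: real assume r: "0 < r"
  obtain c where c: "0 < c" and le: "\<forall>\<^sub>F n in sequentially. f n \<le> c * (r / 2) ^ n"
    using bound r by (meson half_gt_zero)
  have "\<forall>\<^sub>F n in sequentially. root n c < 2"
    using order_tendstoD(2)[OF LIMSEQ_root_const[OF c]] by simp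
  with le eventually_gt_at_top[of 0]
  have "\<forall>\<^sub>F n in sequentially. norm (root n (f n) - 0) < r"
  proof eventually_elim
    case (elim n)
    have "root n (f n) \<le> root n (c * (r / 2) ^ n)"
      using elim by simp
    also have "\<dots> = root n c * (r / 2)"
      using elim r by (simp add: real_root_mult real_root_pos2)
    also have "\<dots> < r"
      using elim r by (simp add: field_simps)
    finally show ?case
      using nonneg[of n] by (simp add: real_root_ge_zero)
  qed
  then show "\<exists>N. \<forall>n\<ge>N. norm (root n (f n) - 0) < r"
    by (simp add: eventually_sequentially)
qed

lemma quasinilpotent_eventually_norm_power_le:
  assumes "quasinilpotent x" and "0 < e"
  shows "\<forall>\<^sub>F n in sequentially. norm (x ^ n) \<le> e ^ n"
  using assms unfolding quasinilpotent_def by (rule eventually_le_power_if_root_tendsto_0)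

lemma m2_norm_nonneg: "0 \<le> m2_norm X"
  by (cases X) simp

lemma m2_quasinilpotentI:
  assumes "\<And>e. 0 < e \<Longrightarrow> \<exists>c>0. \<forall>\<^sub>F n in sequentially. m2_norm (m2_pow X n) \<le> c * e ^ n"
  shows "m2_quasinilpotent X"
  unfolding m2_quasinilpotent_def
  using m2_norm_nonneg assms by (rule root_tendsto_0_if_exponential_bound)

lemma scaleC_zero_right [simp]: "scaleC a (0::'a::complex_banach_algebra_1) = 0"
  by (metis add_cancel_right_right scaleC_add_right)

lemma twisted_commute_power:
  fixes a B d :: "'a::complex_banach_algebra_1"
  assumes "a * B = scaleC l (B * d)"
  shows "a ^ n * B = scaleC (l ^ n) (B * d ^ n)"
proof (induction n)
  case 0
  show ?case by (simp add: scaleC_one)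
next
  case (Suc n)
  have "a ^ Suc n * B = scaleC (l ^ n) (a * B * d ^ n)"
    using Suc by (simp add: mult_scaleC_right mult.assoc)
  also have "\<dots> = scaleC (l ^ Suc n) (B * d ^ Suc n)"
    using assms by (simp add: mult_scaleC_left scaleC_scaleC mult.assoc mult.commute)
  finally show ?case .
qed

lemma twisted_commute_power_inverse:
  fixes a B d :: "'a::complex_banach_algebra_1"
  assumes "a * B = scaleC l (B * d)" and "l \<noteq> 0"
  shows "B * d ^ n = scaleC (inverse l ^ n) (a ^ n * B)"
  using twisted_commute_power[OF assms(1), of n] assms(2)
  by (simp add: scaleC_scaleC power_inverse scaleC_one)

lemma twisted_commute_annihilates:
  fixes a B C d :: "'a::complex_banach_algebra_1"
  assumes "a * B = scaleC l (B * d)" and "l \<noteq> 0" and "B * C = 0"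
  shows "B * d ^ n * C = 0"
  using twisted_commute_power_inverse[OF assms(1,2), of n] assms(3)
  by (simp add: mult_scaleC_left mult.assoc)

lemma gdrazin_power_mult:
  assumes "is_gdrazin d dd"
  shows "d ^ n * dd ^ (n + 1) = dd"
proof (induction n)
  case (Suc n)
  have "d * dd * dd = dd"
    using assms unfolding is_gdrazin_def by metis
  moreover have "d ^ Suc n * dd ^ (Suc n + 1) = d ^ n * (d * dd * dd) * dd ^ n"
    unfolding power_Suc2[of d] by (simp add: mult.assoc)
  ultimately have "d ^ Suc n * dd ^ (Suc n + 1) = d ^ n * dd ^ (n + 1)"
    by (simp add: mult.assoc)
  then show ?case using Suc by simp
qed simp

(* B dd = l^-n a^n B dd^(n+1) for every n; once norm (a^n) <= (cmod l / (2 (norm dd + 1)))^n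
   the right-hand side is O(2^-n). *)

lemma twisted_commute_mult_gdrazin_eq_0:
  fixes a B d dd :: "'a::complex_banach_algebra_1"
  assumes l: "l \<noteq> 0" and qa: "quasinilpotent a" and aB: "a * B = scaleC l (B * d)"
    and g: "is_gdrazin d dd"
  shows "B * dd = 0"
proof -
  define D1 where "D1 = norm dd + 1"
  define \<epsilon> where "\<epsilon> = cmod l / (2 * D1)"
  have D1: "0 < D1" "norm dd \<le> D1" by (simp_all add: D1_def add_nonneg_pos)
  have \<epsilon>: "0 < \<epsilon>" using l D1 by (simp add: \<epsilon>_def)
  have "norm (B * dd) \<le> (norm B * D1) * (1 / 2) ^ n"
    if an: "norm (a ^ n) \<le> \<epsilon> ^ n" for n
  proof -
    have "B * dd = scaleC (inverse l ^ n) (a ^ n * B * dd ^ (n + 1))"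
      using gdrazin_power_mult[OF g, of n] twisted_commute_power_inverse[OF aB l, of n]
      by (metis mult.assoc mult_scaleC_left)
    then have "norm (B * dd) = norm (a ^ n * B * dd ^ (n + 1)) / cmod l ^ n"
      by (simp add: norm_scaleC norm_power norm_inverse divide_inverse power_inverse)
    also have "\<dots> \<le> norm (a ^ n) * norm B * D1 ^ (n + 1) / cmod l ^ n"
    proof (intro divide_right_mono)
      have "norm (dd ^ (n + 1)) \<le> D1 ^ (n + 1)"
        using norm_power_ineq[of dd] power_mono[OF D1(2)] by (meson norm_ge_zero order_trans)
      then show "norm (a ^ n * B * dd ^ (n + 1)) \<le> norm (a ^ n) * norm B * D1 ^ (n + 1)"
        by (smt (verit) mult_mono norm_ge_zero norm_mult_ineq zero_le_mult_iff)
    qed simp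
    also have "\<dots> \<le> \<epsilon> ^ n * norm B * D1 ^ (n + 1) / cmod l ^ n"
      using an D1 by (intro divide_right_mono mult_right_mono) auto
    also have "\<dots> = (norm B * D1) * (1 / 2) ^ n"
      using l D1 by (simp add: \<epsilon>_def power_divide power_mult_distrib field_simps)
    finally show ?thesis .
  qed
  then have "\<forall>\<^sub>F n in sequentially. norm (B * dd) \<le> (norm B * D1) * (1 / 2) ^ n"
    using quasinilpotent_eventually_norm_power_le[OF qa \<epsilon>] by (rule eventually_mono[rotated])
  moreover have "(\<lambda>n. (norm B * D1) * (1 / 2 :: real) ^ n) \<longlonglongrightarrow> 0"
    by (intro tendsto_mult_right_zero LIMSEQ_power_zero) simp
  ultimately have "norm (B * dd) \<le> 0"
    by (intro tendsto_le[OF trivial_limit_sequentially _ tendsto_const]) simp_all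
  then show ?thesis by simp
qed

lemma gdrazin_mult_spec_idem:
  assumes "is_gdrazin x xd"
  shows "xd * spec_idem x xd = 0"
  using assms by (simp add: is_gdrazin_def spec_idem_def right_diff_distrib mult.assoc)

lemma gdrazin_twisted_block_conditions:
  fixes A B D Ad Dd :: "'a::complex_banach_algebra_1"
  assumes l: "l \<noteq> 0" and gA: "is_gdrazin A Ad" and gD: "is_gdrazin D Dd"
    and AB: "A * B = scaleC l (spec_idem A Ad * B * D)"
  shows "Ad * B = 0" and "B * Dd = 0"
    and "(A - A\<^sup>2 * Ad) * B = scaleC l (B * (D - D\<^sup>2 * Dd))"
proof -
  have cA: "Ad * A = A * Ad" and iA: "Ad = Ad * A * Ad"
    using gA by (auto simp: is_gdrazin_def)
  have AdAB: "Ad * A * B = 0"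
    using AB gdrazin_mult_spec_idem[OF gA]
    by (metis mult.assoc mult_scaleC_right mult_zero_left scaleC_zero_right)
  then show "Ad * B = 0"
    using iA cA by (metis mult.assoc mult_zero_right)
  have "A\<^sup>2 * Ad * B = 0"
    using AdAB cA by (simp add: power2_eq_square mult.assoc)
  moreover have "spec_idem A Ad * B = B"
    using AdAB cA by (simp add: spec_idem_def left_diff_distrib)
  ultimately have aB: "(A - A\<^sup>2 * Ad) * B = scaleC l (B * D)"
    using AB by (simp add: left_diff_distrib)
  moreover have "quasinilpotent (A - A\<^sup>2 * Ad)"
    using gA by (simp add: is_gdrazin_def)
  ultimately show BDd: "B * Dd = 0"
    using twisted_commute_mult_gdrazin_eq_0 l gD by blast
  have "B * (D\<^sup>2 * Dd) = B * Dd * D\<^sup>2"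
    using gD by (simp add: is_gdrazin_def power2_eq_square mult.assoc) (metis mult.assoc)
  then show "(A - A\<^sup>2 * Ad) * B = scaleC l (B * (D - D\<^sup>2 * Dd))"
    using aB BDd by (simp add: right_diff_distrib)
qed

lemma sum_power_le_one_plus_power:
  fixes x :: real
  assumes "0 \<le> x"
  shows "(\<Sum>k\<le>m. x ^ k) \<le> (1 + x) ^ m"
proof (induction m)
  case (Suc m)
  have "(\<Sum>k\<le>Suc m. x ^ k) = 1 + x * (\<Sum>k\<le>m. x ^ k)"
    by (simp add: sum.atMost_Suc_shift sum_distrib_left del: sum.atMost_Suc)
  also have "\<dots> \<le> (1 + x) ^ m + x * (1 + x) ^ m"
    using Suc assms by (intro add_mono mult_left_mono one_le_power) auto
  finally show ?case by (simp add: algebra_simps)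
qed simp

lemma norm_sum_power_le: "cmod (\<Sum>k\<le>m. l ^ k) \<le> (1 + cmod l) ^ m"
  using norm_sum[of "\<lambda>k. l ^ k" "{..m}"] sum_power_le_one_plus_power[of "cmod l" m]
  by (simp add: norm_power)

lemma norm_sum_power_mult_sum_power_le:
  "cmod (\<Sum>m\<le>n. l ^ m * (\<Sum>k\<le>m. l ^ k)) \<le> (1 + cmod l) ^ (2 * n)"
proof -
  have "cmod (\<Sum>m\<le>n. l ^ m * (\<Sum>k\<le>m. l ^ k)) \<le> (\<Sum>m\<le>n. cmod l ^ m * (1 + cmod l) ^ n)"
  proof (intro sum_norm_le)
    fix m assume "m \<in> {..n}"
    then have "(1 + cmod l) ^ m \<le> (1 + cmod l) ^ n"
      by (intro power_increasing) auto
    then show "cmod (l ^ m * (\<Sum>k\<le>m. l ^ k)) \<le> cmod l ^ m * (1 + cmod l) ^ n"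
      using norm_sum_power_le[of l m]
      by (simp add: norm_mult norm_power mult_left_mono)
  qed
  also have "\<dots> \<le> (1 + cmod l) ^ n * (1 + cmod l) ^ n"
    using sum_power_le_one_plus_power[of "cmod l" n]
    by (simp add: sum_distrib_right[symmetric] mult_right_mono)
  finally show ?thesis by (simp add: power_add[symmetric] mult_2)
qed

lemma m2_mult_twisted_step:
  fixes a B C d :: "'a::complex_banach_algebra_1"
  assumes aB: "a * B = scaleC l (B * d)" and dC: "d * C = scaleC l (C * a)"
    and BdC: "\<And>k. B * d ^ k * C = 0"
  shows "m2_mult (M2 (a ^ (n + 2)) (scaleC \<beta> (B * d ^ (n + 1)))
                     (scaleC \<beta> (C * a ^ (n + 1))) (d ^ (n + 2) + scaleC \<delta> (C * B * d ^ n)))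
                 (M2 a B C d)
       = M2 (a ^ (Suc n + 2)) (scaleC (\<beta> + l ^ (n + 2)) (B * d ^ (Suc n + 1)))
            (scaleC (\<beta> + l ^ (n + 2)) (C * a ^ (Suc n + 1)))
            (d ^ (Suc n + 2) + scaleC (\<delta> + l ^ Suc n * \<beta>) (C * B * d ^ Suc n))"
proof -
  have "a ^ (n + 2) * a + scaleC \<beta> (B * d ^ (n + 1)) * C = a ^ (Suc n + 2)"
    using BdC[of "n + 1"] by (simp add: mult_scaleC_left mult.assoc power_commutes)
  moreover have "a ^ (n + 2) * B + scaleC \<beta> (B * d ^ (n + 1)) * d
      = scaleC (\<beta> + l ^ (n + 2)) (B * d ^ (Suc n + 1))"
    using twisted_commute_power[OF aB, of "n + 2"]
    by (simp add: mult_scaleC_left scaleC_add_left mult.assoc power_Suc2[symmetric] add.commute)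
  moreover have "scaleC \<beta> (C * a ^ (n + 1)) * a + (d ^ (n + 2) + scaleC \<delta> (C * B * d ^ n)) * C
      = scaleC (\<beta> + l ^ (n + 2)) (C * a ^ (Suc n + 1))"
    using twisted_commute_power[OF dC, of "n + 2"] BdC[of n]
    by (simp add: distrib_right mult_scaleC_left scaleC_add_left mult.assoc power_Suc2[symmetric])
  moreover have "scaleC \<beta> (C * a ^ (n + 1)) * B + (d ^ (n + 2) + scaleC \<delta> (C * B * d ^ n)) * d
      = d ^ (Suc n + 2) + scaleC (\<delta> + l ^ Suc n * \<beta>) (C * B * d ^ Suc n)"
    using twisted_commute_power[OF aB, of "n + 1"]
    by (simp add: distrib_right mult_scaleC_left mult_scaleC_right scaleC_add_left scaleC_scaleC
        mult.assoc power_Suc2[symmetric] algebra_simps)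
  ultimately show ?thesis by simp
qed

lemma m2_pow_twisted:
  fixes a B C d :: "'a::complex_banach_algebra_1"
  assumes aB: "a * B = scaleC l (B * d)" and dC: "d * C = scaleC l (C * a)"
    and BdC: "\<And>k. B * d ^ k * C = 0"
  shows "m2_pow (M2 a B C d) (n + 2) =
    M2 (a ^ (n + 2)) (scaleC (\<Sum>k\<le>n + 1. l ^ k) (B * d ^ (n + 1)))
       (scaleC (\<Sum>k\<le>n + 1. l ^ k) (C * a ^ (n + 1)))
       (d ^ (n + 2) + scaleC (\<Sum>m\<le>n. l ^ m * (\<Sum>k\<le>m. l ^ k)) (C * B * d ^ n))"
proof (induction n)
  case 0
  have "B * C = 0" using BdC[of 0] by simp
  then show ?case
    using aB dC by (simp add: numeral_2_eq_2 m2_one_def power2_eq_square scaleC_add_left scaleC_one)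
next
  case (Suc n)
  have "m2_pow (M2 a B C d) (Suc n + 2) = m2_mult (m2_pow (M2 a B C d) (n + 2)) (M2 a B C d)"
    by simp
  also have "\<dots> = M2 (a ^ (Suc n + 2)) (scaleC (\<Sum>k\<le>Suc n + 1. l ^ k) (B * d ^ (Suc n + 1)))
       (scaleC (\<Sum>k\<le>Suc n + 1. l ^ k) (C * a ^ (Suc n + 1)))
       (d ^ (Suc n + 2) + scaleC (\<Sum>m\<le>Suc n. l ^ m * (\<Sum>k\<le>m. l ^ k)) (C * B * d ^ Suc n))"
    unfolding Suc.IH m2_mult_twisted_step[OF aB dC BdC] by (simp add: add.commute)
  finally show ?case .
qed

lemma norm_scaleC_mult_le:
  fixes x y :: "'a::complex_banach_algebra_1"
  assumes "cmod \<beta> \<le> K" and "norm y \<le> N"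
  shows "norm (scaleC \<beta> (x * y)) \<le> K * (norm x * N)"
proof -
  have "norm (scaleC \<beta> (x * y)) \<le> cmod \<beta> * (norm x * norm y)"
    by (simp add: norm_scaleC mult_left_mono norm_mult_ineq)
  also have "\<dots> \<le> K * (norm x * N)"
    using assms by (intro mult_mono mult_left_mono) (auto intro: order_trans[OF norm_ge_zero])
  finally show ?thesis .
qed

lemma m2_norm_pow_twisted_le:
  fixes a B C d :: "'a::complex_banach_algebra_1"
  assumes aB: "a * B = scaleC l (B * d)" and dC: "d * C = scaleC l (C * a)"
    and BdC: "\<And>k. B * d ^ k * C = 0"
    and a_le: "\<And>k. n \<le> k \<Longrightarrow> norm (a ^ k) \<le> M" and d_le: "\<And>k. n \<le> k \<Longrightarrow> norm (d ^ k) \<le> M"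
  shows "m2_norm (m2_pow (M2 a B C d) (n + 2))
    \<le> M * (2 + (1 + cmod l) * (norm B + norm C) + norm C * norm B) * (1 + cmod l) ^ (2 * n)"
proof -
  define L where "L = 1 + cmod l"
  define \<beta> where "\<beta> = (\<Sum>k\<le>n + 1. l ^ k)"
  define \<delta> where "\<delta> = (\<Sum>m\<le>n. l ^ m * (\<Sum>k\<le>m. l ^ k))"
  have L: "1 \<le> L" by (simp add: L_def)
  have M: "0 \<le> M" using a_le[of n] norm_ge_zero order_trans by blast
  have M_le: "M \<le> M * L ^ (2 * n)" using mult_left_mono[OF one_le_power[OF L] M] by simp
  have "cmod \<beta> \<le> L * L ^ n" using norm_sum_power_le[of l "n + 1"] by (simp add: \<beta>_def L_def)
  also have "\<dots> \<le> L * L ^ (2 * n)" using L by (intro mult_left_mono power_increasing) auto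
  finally have \<beta>_le: "cmod \<beta> \<le> L * L ^ (2 * n)" .
  have \<delta>_le: "cmod \<delta> \<le> L ^ (2 * n)"
    using norm_sum_power_mult_sum_power_le[of l n] by (simp add: \<delta>_def L_def)
  have "norm (scaleC \<beta> (B * d ^ (n + 1))) \<le> L * L ^ (2 * n) * (norm B * M)"
    using \<beta>_le d_le[of "n + 1"] by (rule norm_scaleC_mult_le) simp
  moreover have "norm (scaleC \<beta> (C * a ^ (n + 1))) \<le> L * L ^ (2 * n) * (norm C * M)"
    using \<beta>_le a_le[of "n + 1"] by (rule norm_scaleC_mult_le) simp
  moreover have "norm (scaleC \<delta> (C * B * d ^ n)) \<le> L ^ (2 * n) * (norm (C * B) * M)"
    using \<delta>_le d_le[of n] by (rule norm_scaleC_mult_le) simp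
  moreover have "L ^ (2 * n) * (norm (C * B) * M) \<le> L ^ (2 * n) * (norm C * norm B * M)"
    using M L by (intro mult_left_mono mult_right_mono norm_mult_ineq) auto
  moreover have "norm (a ^ (n + 2)) \<le> M * L ^ (2 * n)" "norm (d ^ (n + 2)) \<le> M * L ^ (2 * n)"
    using a_le[of "n + 2"] d_le[of "n + 2"] M_le by simp_all
  ultimately show ?thesis
    unfolding m2_pow_twisted[OF aB dC BdC] \<beta>_def[symmetric] \<delta>_def[symmetric] L_def[symmetric]
    using norm_triangle_ineq[of "d ^ (n + 2)" "scaleC \<delta> (C * B * d ^ n)"]
    by (simp add: algebra_simps)
qed

lemma m2_quasinilpotent_twisted:
  fixes a B C d :: "'a::complex_banach_algebra_1"
  assumes l: "l \<noteq> 0" and qa: "quasinilpotent a" and qd: "quasinilpotent d"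
    and aB: "a * B = scaleC l (B * d)" and dC: "d * C = scaleC l (C * a)" and BC: "B * C = 0"
  shows "m2_quasinilpotent (M2 a B C d)"
proof (rule m2_quasinilpotentI)
  fix e :: real assume e: "0 < e"
  define L where "L = 1 + cmod l"
  define W where "W = 2 + L * (norm B + norm C) + norm C * norm B"
  \<comment> \<open>the coefficients of the powers grow like L^(2n), which the choice of \<epsilon> absorbs\<close>
  define \<epsilon> where "\<epsilon> = min 1 (e / L\<^sup>2)"
  have L: "1 \<le> L" by (simp add: L_def)
  have \<epsilon>: "0 < \<epsilon>" "\<epsilon> \<le> 1" "L\<^sup>2 * \<epsilon> \<le> e"
    using e L by (auto simp: \<epsilon>_def min_def field_simps)
  have W: "0 < W" by (simp add: W_def L_def add_pos_nonneg)
  obtain N where N: "\<And>k. N \<le> k \<Longrightarrow> norm (a ^ k) \<le> \<epsilon> ^ k \<and> norm (d ^ k) \<le> \<epsilon> ^ k"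
    using eventually_conj[OF quasinilpotent_eventually_norm_power_le[OF qa \<epsilon>(1)]
        quasinilpotent_eventually_norm_power_le[OF qd \<epsilon>(1)]]
    unfolding eventually_sequentially by blast
  have bound: "m2_norm (m2_pow (M2 a B C d) (n + 2)) \<le> (W / e\<^sup>2) * e ^ (n + 2)"
    if "N \<le> n" for n
  proof -
    have "\<epsilon> ^ k \<le> \<epsilon> ^ n" if "n \<le> k" for k
      using \<epsilon> that by (intro power_decreasing) auto
    then have "m2_norm (m2_pow (M2 a B C d) (n + 2)) \<le> \<epsilon> ^ n * W * L ^ (2 * n)"
      unfolding W_def L_def using N \<open>N \<le> n\<close>
      by (intro m2_norm_pow_twisted_le[OF aB dC twisted_commute_annihilates[OF aB l BC]])
        (meson order_trans le_trans)+
    also have "\<dots> = W * (L\<^sup>2 * \<epsilon>) ^ n"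
      by (simp add: power_mult power_mult_distrib)
    also have "\<dots> \<le> W * e ^ n"
      using W \<epsilon> L by (intro mult_left_mono power_mono) auto
    also have "\<dots> = (W / e\<^sup>2) * e ^ (n + 2)"
      using e by (simp add: power_add power2_eq_square)
    finally show ?thesis .
  qed
  have "\<forall>\<^sub>F n in sequentially. m2_norm (m2_pow (M2 a B C d) (n + 2)) \<le> (W / e\<^sup>2) * e ^ (n + 2)"
    using eventually_ge_at_top[of N] by (rule eventually_mono) (rule bound)
  then have "\<forall>\<^sub>F n in sequentially. m2_norm (m2_pow (M2 a B C d) n) \<le> (W / e\<^sup>2) * e ^ n"
    by (rule eventually_sequentially_seg[THEN iffD1])
  then show "\<exists>c>0. \<forall>\<^sub>F n in sequentially. m2_norm (m2_pow (M2 a B C d) n) \<le> c * e ^ n"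
    using W e by (intro exI[of _ "W / e\<^sup>2"]) auto
qed

lemma m2_is_gdrazin_diagI:
  fixes A B C D Ad Dd :: "'a::real_normed_algebra_1"
  assumes gA: "is_gdrazin A Ad" and gD: "is_gdrazin D Dd"
    and AdB: "Ad * B = 0" and BDd: "B * Dd = 0" and DdC: "Dd * C = 0" and CAd: "C * Ad = 0"
    and BC: "B * C = 0"
    and qn: "m2_quasinilpotent (M2 (A - A\<^sup>2 * Ad) B C (D - D\<^sup>2 * Dd))"
  shows "m2_is_gdrazin (M2 A B C D) (M2 Ad 0 0 Dd)"
  unfolding m2_is_gdrazin_def
proof (intro conjI)
  have cA: "Ad * A = A * Ad" and iA: "Ad = Ad * A * Ad"
    using gA by (auto simp: is_gdrazin_def)
  have cD: "Dd * D = D * Dd" and iD: "Dd = Dd * D * Dd"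
    using gD by (auto simp: is_gdrazin_def)
  show "m2_mult (M2 Ad 0 0 Dd) (M2 A B C D) = m2_mult (M2 A B C D) (M2 Ad 0 0 Dd)"
    using AdB DdC BDd CAd cA cD by simp
  show "M2 Ad 0 0 Dd = m2_mult (m2_mult (M2 Ad 0 0 Dd) (M2 A B C D)) (M2 Ad 0 0 Dd)"
    using AdB DdC iA iD by simp
  have "m2_mult (m2_pow (M2 A B C D) 2) (M2 Ad 0 0 Dd) = M2 (A\<^sup>2 * Ad) 0 0 (D\<^sup>2 * Dd)"
    using BC BDd CAd cA cD
    by (simp add: numeral_2_eq_2 m2_one_def power2_eq_square distrib_right mult.assoc)
      (metis mult.assoc mult_zero_left)
  then show "m2_quasinilpotent (m2_diff (M2 A B C D) (m2_mult (m2_pow (M2 A B C D) 2) (M2 Ad 0 0 Dd)))"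
    using qn by simp
qed

theorem theorem4p3:
  fixes A B C D Ad Dd :: "'a::complex_banach_algebra_1" and lam :: complex
  assumes "lam \<noteq> 0"
    and "is_gdrazin A Ad" and "is_gdrazin D Dd"
    and "A * B = scaleC lam (spec_idem A Ad * B * D)"
    and "D * C = scaleC lam (spec_idem D Dd * C * A)"
    and "B * C = 0"
  shows "\<exists>S. m2_sums (\<lambda>n. m2_mult (m2_pow (M2 A B C D) n)
                              (M2 0 (B * Dd ^ (n + 2)) (C * Ad ^ (n + 2)) 0)) S
           \<and> m2_is_gdrazin (M2 A B C D) (m2_add (M2 Ad 0 0 Dd) S)"
proof -
  note l = assms(1) and gA = assms(2) and gD = assms(3)
  note AB = gdrazin_twisted_block_conditions[OF l gA gD assms(4)]
  note DC = gdrazin_twisted_block_conditions[OF l gD gA assms(5)]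
  have "quasinilpotent (A - A\<^sup>2 * Ad)" "quasinilpotent (D - D\<^sup>2 * Dd)"
    using gA gD by (simp_all add: is_gdrazin_def)
  then have "m2_quasinilpotent (M2 (A - A\<^sup>2 * Ad) B C (D - D\<^sup>2 * Dd))"
    using m2_quasinilpotent_twisted l AB(3) DC(3) assms(6) by blast
  then have "m2_is_gdrazin (M2 A B C D) (M2 Ad 0 0 Dd)"
    using m2_is_gdrazin_diagI gA gD AB(1,2) DC(1,2) assms(6) by blast
  moreover have "m2_mult X (M2 0 (B * Dd ^ (n + 2)) (C * Ad ^ (n + 2)) 0) = M2 0 0 0 0" for X n
    using AB(2) DC(2) by (cases X) (simp add: mult.assoc[symmetric])
  ultimately show ?thesis
    by (intro exI[of _ "M2 0 0 0 0"]) (simp add: m2_sums_def)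
qed

end
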